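(* Let $R$ be an $h$-local domain with field of fractions $Q$, let $\Lambda$ be an $R$-algebra, and let $M$ be a finitely generated right $\Lambda$-module which is torsion-free as an $R$-module. For each maximal ideal $\mathfrak m$ of $R$ let $X(\mathfrak m)$ be a $\Lambda_\mathfrak m$-submodule of $M_\mathfrak m$, torsion-free as an $R_\mathfrak m$-module, with $X(\mathfrak m)\otimes Q=M_\mathfrak m\otimes Q$. The following are equivalent: (i) there is a $\Lambda$-submodule $N\subseteq M$, torsion-free as an $R$-module, with $N_\mathfrak m=X(\mathfrak m)$ for all maximal ideals $\mathfrak m$ of $R$; (ii) $X(\mathfrak m)=M_\mathfrak m$ for all but finitely many maximal ideals $\mathfrak m$ of $R$. Moreover, if each $X(\mathfrak m)$ is finitely generated as a $\Lambda_\mathfrak m$-module, then such an $N$ is finitely generated as a $\Lambda$-module.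
   Context: A commutative domain is $h$-local if every non-zero element lies in only finitely many maximal ideals and every non-zero prime ideal is contained in a unique maximal ideal. A module is torsion-free over $R$ if $M\to M\otimes_R Q$ is injective; submodules of $M$ and $M_\mathfrak m$ are viewed inside $M\otimes_R Q$. *)

theory Defs
  imports Complex_Main "HOL-Algebra.Ideal"
begin

text \<open>The domain R is given as a subring of a field type 'k which is
its field of fractions Q.  Since M is R-torsion-free, M, its localizations and all
submodules are viewed inside the Q-vector space V = M \<otimes>_R Q (the type 'v with
scalar multiplication scl).  The R-algebra Lambda is a ring type 'l with a ring map
phi from R into the centre of Lambda, and Lambda acts on V from the right (act),
Q-linearly, extending its action on M.\<close>

definition ring_of :: "'k::field set \<Rightarrow> 'k ring" where
  "ring_of R = \<lparr>carrier = R, monoid.mult = (*), one = 1, zero = 0, add = (+)\<rparr>"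

definition frac_field_of :: "'k::field set \<Rightarrow> bool" where
  "frac_field_of R \<longleftrightarrow> (\<forall>x::'k. \<exists>a\<in>R. \<exists>b\<in>R. b \<noteq> 0 \<and> x = a / b)"

definition max_ideals :: "'k::field set \<Rightarrow> 'k set set" where
  "max_ideals R = {m. maximalideal m (ring_of R)}"

definition h_local :: "'k::field set \<Rightarrow> bool" where
  "h_local R \<longleftrightarrow>
     (\<forall>x\<in>R. x \<noteq> 0 \<longrightarrow> finite {m \<in> max_ideals R. x \<in> m}) \<and>
     (\<forall>P. primeideal P (ring_of R) \<and> P \<noteq> {0} \<longrightarrow> (\<exists>!m. m \<in> max_ideals R \<and> P \<subseteq> m))"

definition R_algebra :: "'k::field set \<Rightarrow> ('k \<Rightarrow> 'l::ring_1) \<Rightarrow> bool" where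
  "R_algebra R phi \<longleftrightarrow> phi 1 = 1 \<and>
     (\<forall>a\<in>R. \<forall>b\<in>R. phi (a + b) = phi a + phi b \<and> phi (a * b) = phi a * phi b) \<and>
     (\<forall>a\<in>R. \<forall>l. phi a * l = l * phi a)"

definition right_action ::
  "'k::field set \<Rightarrow> ('k \<Rightarrow> 'v::ab_group_add \<Rightarrow> 'v) \<Rightarrow> ('k \<Rightarrow> 'l::ring_1) \<Rightarrow> ('v \<Rightarrow> 'l \<Rightarrow> 'v) \<Rightarrow> bool" where
  "right_action R scl phi act \<longleftrightarrow>
     (\<forall>v w l. act (v + w) l = act v l + act w l) \<and>
     (\<forall>v l l'. act v (l + l') = act v l + act v l') \<and>
     (\<forall>v l l'. act v (l * l') = act (act v l) l') \<and>
     (\<forall>v. act v 1 = v) \<and>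
     (\<forall>c v l. act (scl c v) l = scl c (act v l)) \<and>
     (\<forall>r\<in>R. \<forall>v. act v (phi r) = scl r v)"

definition loc_ring :: "'k::field set \<Rightarrow> 'k set \<Rightarrow> 'k set" where
  "loc_ring R m = {a / s | a s. a \<in> R \<and> s \<in> R \<and> s \<notin> m}"

definition loc :: "'k::field set \<Rightarrow> ('k \<Rightarrow> 'v \<Rightarrow> 'v) \<Rightarrow> 'k set \<Rightarrow> 'v set \<Rightarrow> 'v set" where
  "loc R scl m A = {scl (inverse s) a | a s. a \<in> A \<and> s \<in> R \<and> s \<notin> m}"

text \<open>Submodule over Lambda \<otimes>_R S for a subring S of Q (S = R: Lambda-submodule;
S = R_m: Lambda_m-submodule).  Torsion-freeness is automatic inside V.\<close>
definition submod ::
  "'k::field set \<Rightarrow> ('k \<Rightarrow> 'v::ab_group_add \<Rightarrow> 'v) \<Rightarrow> ('v \<Rightarrow> 'l \<Rightarrow> 'v) \<Rightarrow> 'v set \<Rightarrow> bool" where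
  "submod S scl act A \<longleftrightarrow> 0 \<in> A \<and> (\<forall>x\<in>A. \<forall>y\<in>A. x + y \<in> A) \<and> (\<forall>x\<in>A. - x \<in> A) \<and>
     (\<forall>x\<in>A. \<forall>l. act x l \<in> A) \<and> (\<forall>c\<in>S. \<forall>x\<in>A. scl c x \<in> A)"

text \<open>The (Lambda \<otimes>_R S)-submodule generated by a finite set F: every element of
Lambda \<otimes>_R S acts as x \<mapsto> c \<cdot> (x l) with c \<in> S, l \<in> Lambda.\<close>
definition gen_span ::
  "'k::field set \<Rightarrow> ('k \<Rightarrow> 'v::ab_group_add \<Rightarrow> 'v) \<Rightarrow> ('v \<Rightarrow> 'l \<Rightarrow> 'v) \<Rightarrow> 'v set \<Rightarrow> 'v set" where
  "gen_span S scl act F = {(\<Sum>f\<in>F. scl (c f) (act f (l f))) | c l. \<forall>f\<in>F. c f \<in> S}"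

definition fin_gen ::
  "'k::field set \<Rightarrow> ('k \<Rightarrow> 'v::ab_group_add \<Rightarrow> 'v) \<Rightarrow> ('v \<Rightarrow> 'l \<Rightarrow> 'v) \<Rightarrow> 'v set \<Rightarrow> bool" where
  "fin_gen S scl act A \<longleftrightarrow> (\<exists>F. finite F \<and> F \<subseteq> A \<and> A = gen_span S scl act F)"

end

theory Submission
  imports Defs
begin

text \<open>If N realizes the family X, then M \<subseteq> Q N and M is finitely generated, so r M \<subseteq> N for some
r \<noteq> 0; hence N_m = M_m for every maximal ideal m not containing r, and only finitely many maximal
ideals contain r.  Conversely take N = M \<inter> \<Inter>_m X(m).  An element of X(m) is moved into every X(n)
by a unit of R_m: for the finitely many n \<noteq> m with X(n) \<noteq> M_n this uses r M \<subseteq> X(n) together with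
the consequence of h-locality that some s \<notin> m has s/r \<in> R_n.  Finally, N is generated by r F
(F generating M) and by finitely many lifts of local generators at the maximal ideals containing r,
because membership in an R-submodule can be tested locally.\<close>

lemma ring_of_simps [simp]:
  "carrier (ring_of R) = R" "monoid.mult (ring_of R) = (*)"
  "one (ring_of R) = 1" "zero (ring_of R) = 0" "add (ring_of R) = (+)"
  by (simp_all add: ring_of_def)

locale subdomain =
  fixes R :: "'k::field set"
  assumes domain: "domain (ring_of R)"
begin

sublocale Rd: domain "ring_of R" by (rule domain)

lemma zero_in [simp]: "0 \<in> R" and one_in [simp]: "1 \<in> R"
  using Rd.zero_closed Rd.one_closed by simp_all

lemma add_in: "x \<in> R \<Longrightarrow> y \<in> R \<Longrightarrow> x + y \<in> R"
  and mult_in: "x \<in> R \<Longrightarrow> y \<in> R \<Longrightarrow> x * y \<in> R"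
  using Rd.add.m_closed Rd.m_closed by simp_all

lemma a_inv_eq: "x \<in> R \<Longrightarrow> \<ominus>\<^bsub>ring_of R\<^esub> x = - x"
  using Rd.r_neg[of x] by (simp add: eq_neg_iff_add_eq_0 add.commute)

lemma uminus_in: "x \<in> R \<Longrightarrow> - x \<in> R"
  using Rd.a_inv_closed a_inv_eq by fastforce

lemma ideal_ring_ofI:
  assumes "J \<subseteq> R" "0 \<in> J" "\<And>x y. x \<in> J \<Longrightarrow> y \<in> J \<Longrightarrow> x + y \<in> J"
    and "\<And>a x. a \<in> R \<Longrightarrow> x \<in> J \<Longrightarrow> a * x \<in> J"
  shows "ideal J (ring_of R)"
proof (rule idealI[OF Rd.ring_axioms])
  have "- x \<in> J" if "x \<in> J" for x
    using assms(4)[OF uminus_in[OF one_in] that] by simp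
  then show "subgroup J (add_monoid (ring_of R))"
    using assms(1-3) a_inv_eq by (intro Rd.add.subgroupI) (auto simp: a_inv_def)
qed (use assms(4) in \<open>simp_all, metis mult.commute\<close>)

lemma ideal_ring_ofD:
  assumes "ideal J (ring_of R)"
  shows "J \<subseteq> R" "0 \<in> J" "\<And>x y. x \<in> J \<Longrightarrow> y \<in> J \<Longrightarrow> x + y \<in> J"
    and "\<And>a x. a \<in> R \<Longrightarrow> x \<in> J \<Longrightarrow> a * x \<in> J"
  using ideal.Icarr[OF assms] additive_subgroup.zero_closed[OF ideal.axioms(1)[OF assms]]
    additive_subgroup.a_closed[OF ideal.axioms(1)[OF assms]] ideal.I_l_closed[OF assms]
  by auto

lemma ideal_Union_chain:
  assumes "C \<noteq> {}" and ideals: "\<And>J. J \<in> C \<Longrightarrow> ideal J (ring_of R)"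
    and chain: "\<And>J K. J \<in> C \<Longrightarrow> K \<in> C \<Longrightarrow> J \<subseteq> K \<or> K \<subseteq> J"
  shows "ideal (\<Union>C) (ring_of R)"
proof (rule ideal_ring_ofI)
  note D = ideal_ring_ofD[OF ideals]
  show "\<Union>C \<subseteq> R" "0 \<in> \<Union>C" using D(1,2) assms(1) by auto
  show "a * x \<in> \<Union>C" if "a \<in> R" "x \<in> \<Union>C" for a x
    using D(4) that by blast
  show "x + y \<in> \<Union>C" if xy: "x \<in> \<Union>C" "y \<in> \<Union>C" for x y
  proof -
    obtain J K where "J \<in> C" "K \<in> C" "x \<in> J" "y \<in> K" using xy by blast
    moreover have "J \<subseteq> K \<or> K \<subseteq> J" using chain calculation by blast
    ultimately show ?thesis using D(3) by blast
  qed
qed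

lemma ex_maximal_ideal_avoiding:
  assumes I: "ideal I (ring_of R)" and IT: "I \<inter> T = {}"
  obtains P where "ideal P (ring_of R)" "I \<subseteq> P" "P \<inter> T = {}"
    "\<And>J. ideal J (ring_of R) \<Longrightarrow> P \<subseteq> J \<Longrightarrow> J \<inter> T = {} \<Longrightarrow> J = P"
proof -
  let ?A = "{J. ideal J (ring_of R) \<and> I \<subseteq> J \<and> J \<inter> T = {}}"
  have "\<exists>P\<in>?A. \<forall>J\<in>?A. P \<subseteq> J \<longrightarrow> J = P"
  proof (rule Zorn_Lemma2, intro ballI)
    fix C assume C: "C \<in> chains ?A"
    then have CA: "\<And>J. J \<in> C \<Longrightarrow> J \<in> ?A" using chainsD2[OF C] by blast
    show "\<exists>U\<in>?A. \<forall>J\<in>C. J \<subseteq> U"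
    proof (cases "C = {}")
      case True
      have "I \<in> ?A" using I IT by simp
      with True show ?thesis by blast
    next
      case False
      then obtain J0 where J0: "J0 \<in> C" by blast
      then have "I \<subseteq> \<Union>C" using CA[OF J0] by blast
      moreover have "ideal (\<Union>C) (ring_of R)"
      proof (rule ideal_Union_chain[OF False])
        show "ideal J (ring_of R)" if "J \<in> C" for J using CA[OF that] by simp
        show "J \<subseteq> K \<or> K \<subseteq> J" if "J \<in> C" "K \<in> C" for J K using chainsD[OF C that] .
      qed
      moreover have "\<Union>C \<inter> T = {}" using CA by blast
      ultimately have "\<Union>C \<in> ?A" by simp
      then show ?thesis by blast
    qed
  qed
  then obtain P where PA: "P \<in> ?A" and max: "\<forall>J\<in>?A. P \<subseteq> J \<longrightarrow> J = P" ..
  then have P: "ideal P (ring_of R)" "I \<subseteq> P" "P \<inter> T = {}" by simp_all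
  show thesis
  proof (rule that[OF P])
    fix J assume J: "ideal J (ring_of R)" "P \<subseteq> J" "J \<inter> T = {}"
    then have "J \<in> ?A" using P(2) by auto
    with max J(2) show "J = P" by simp
  qed
qed

lemma ex_prime_ideal_avoiding:
  assumes I: "ideal I (ring_of R)" and IT: "I \<inter> T = {}"
    and T: "1 \<in> T" "\<And>a b. a \<in> T \<Longrightarrow> b \<in> T \<Longrightarrow> a * b \<in> T"
  obtains P where "primeideal P (ring_of R)" "I \<subseteq> P" "P \<inter> T = {}"
proof -
  obtain P where P: "ideal P (ring_of R)" "I \<subseteq> P" "P \<inter> T = {}"
    and Pmax: "\<And>J. ideal J (ring_of R) \<Longrightarrow> P \<subseteq> J \<Longrightarrow> J \<inter> T = {} \<Longrightarrow> J = P"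
    using ex_maximal_ideal_avoiding[OF I IT] by blast
  note PD = ideal_ring_ofD[OF P(1)]
  have meets_T: "\<exists>p\<in>P. \<exists>x\<in>R. p + x * a \<in> T" if a: "a \<in> R" "a \<notin> P" for a
  proof -
    let ?J = "{p + x * a | p x. p \<in> P \<and> x \<in> R}"
    have "ideal ?J (ring_of R)"
    proof (rule ideal_ring_ofI)
      show "?J \<subseteq> R" using PD(1) a add_in mult_in by blast
      have "(0::'k) = 0 + 0 * a" by simp
      then show "0 \<in> ?J" using PD(2) zero_in by blast
      show "u + v \<in> ?J" if uv: "u \<in> ?J" "v \<in> ?J" for u v
      proof -
        obtain p x q y where "u = p + x * a" "v = q + y * a" "p \<in> P" "q \<in> P" "x \<in> R" "y \<in> R"
          using uv by blast
        moreover have "u + v = (p + q) + (x + y) * a" using calculation by (simp add: algebra_simps)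
        ultimately show ?thesis using PD(3) add_in by blast
      qed
      show "c * u \<in> ?J" if cu: "c \<in> R" "u \<in> ?J" for c u
      proof -
        obtain p x where "u = p + x * a" "p \<in> P" "x \<in> R" using cu by blast
        moreover have "c * u = c * p + (c * x) * a" using calculation by (simp add: algebra_simps)
        ultimately show ?thesis using PD(4) mult_in cu(1) by blast
      qed
    qed
    moreover have "P \<subseteq> ?J"
    proof
      fix p assume "p \<in> P"
      moreover have "p = p + 0 * a" by simp
      ultimately show "p \<in> ?J" using zero_in by blast
    qed
    moreover have "a \<in> ?J"
    proof -
      have "a = 0 + 1 * a" by simp
      then show ?thesis using PD(2) one_in by blast
    qed
    ultimately have "?J \<inter> T \<noteq> {}" using Pmax a(2) by blast
    then show ?thesis by blast
  qed
  have "primeideal P (ring_of R)"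
  proof (rule primeidealI[OF P(1) Rd.is_cring])
    show "carrier (ring_of R) \<noteq> P" using P(3) T(1) one_in by auto
    show "a \<in> P \<or> b \<in> P"
      if ab: "a \<in> carrier (ring_of R)" "b \<in> carrier (ring_of R)" "a \<otimes>\<^bsub>ring_of R\<^esub> b \<in> P" for a b
    proof (rule ccontr)
      assume "\<not> (a \<in> P \<or> b \<in> P)"
      with ab obtain p x q y where pq: "p \<in> P" "x \<in> R" "p + x * a \<in> T" "q \<in> P" "y \<in> R" "q + y * b \<in> T"
        using meets_T[of a] meets_T[of b] by auto
      have "(p + x * a) * (q + y * b) = (p + x * a) * q + (x * y) * (a * b) + (y * b) * p"
        by (simp add: algebra_simps)
      also have "\<dots> \<in> P"
      proof -
        have "p + x * a \<in> R" "x * y \<in> R" "y * b \<in> R"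
          using pq ab PD(1) add_in mult_in by auto
        then show ?thesis using pq ab PD(3,4) by simp
      qed
      finally show False using T(2)[OF pq(3,6)] P(3) by blast
    qed
  qed
  then show thesis using that P(2,3) by blast
qed

lemma ex_max_ideal_containing:
  assumes I: "ideal I (ring_of R)" and "1 \<notin> I"
  obtains m where "m \<in> max_ideals R" "I \<subseteq> m"
proof -
  obtain P where P: "ideal P (ring_of R)" "I \<subseteq> P" "P \<inter> {1} = {}"
    and Pmax: "\<And>J. ideal J (ring_of R) \<Longrightarrow> P \<subseteq> J \<Longrightarrow> J \<inter> {1} = {} \<Longrightarrow> J = P"
    using ex_maximal_ideal_avoiding[OF I, of "{1}"] assms(2) by blast
  have "maximalideal P (ring_of R)"
  proof (rule maximalidealI[OF P(1)])
    show "carrier (ring_of R) \<noteq> P" using P(3) by auto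
    show "J = P \<or> J = carrier (ring_of R)"
      if J: "ideal J (ring_of R)" "P \<subseteq> J" "J \<subseteq> carrier (ring_of R)" for J
    proof (cases "1 \<in> J")
      case True
      then show ?thesis using ideal.one_imp_carrier[OF J(1)] by simp
    qed (use Pmax J in blast)
  qed
  then show thesis using that P(2) by (simp add: max_ideals_def)
qed

lemma ex_max_ideal: "\<exists>m. m \<in> max_ideals R"
  using ex_max_ideal_containing[OF Rd.zeroideal] by auto

lemma max_idealD:
  assumes "m \<in> max_ideals R"
  shows "m \<subseteq> R" "0 \<in> m" "1 \<notin> m"
    and "\<And>a b. a \<in> R \<Longrightarrow> b \<in> R \<Longrightarrow> a \<notin> m \<Longrightarrow> b \<notin> m \<Longrightarrow> a * b \<notin> m"
proof -
  have "maximalideal m (ring_of R)" using assms by (simp add: max_ideals_def)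
  then interpret P: primeideal m "ring_of R" by (rule Rd.maximalideal_prime)
  show "m \<subseteq> R" "0 \<in> m" using ideal_ring_ofD[OF P.is_ideal] by auto
  show "1 \<notin> m" using P.I_notcarr P.one_imp_carrier by auto
  show "a * b \<notin> m" if "a \<in> R" "b \<in> R" "a \<notin> m" "b \<notin> m" for a b
    using P.I_prime that by fastforce
qed

lemma notin_max_ideal_nonzero: "m \<in> max_ideals R \<Longrightarrow> a \<notin> m \<Longrightarrow> a \<noteq> 0"
  using max_idealD(2) by blast

lemma mult_nonzero_in: "a \<in> R - {0} \<Longrightarrow> b \<in> R - {0} \<Longrightarrow> a * b \<in> R - {0}"
  using mult_in by simp

lemma mult_notin_max_ideal: "m \<in> max_ideals R \<Longrightarrow> a \<in> R - m \<Longrightarrow> b \<in> R - m \<Longrightarrow> a * b \<in> R - m"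
  using mult_in max_idealD(4) by blast

lemma mult_closed_products_notin_max_ideals:
  assumes m: "m \<in> max_ideals R" and n: "n \<in> max_ideals R"
  defines "T \<equiv> {s * t | s t. s \<in> R - m \<and> t \<in> R - n}"
  shows "1 \<in> T" and "\<And>a b. a \<in> T \<Longrightarrow> b \<in> T \<Longrightarrow> a * b \<in> T"
proof -
  show "1 \<in> T" using max_idealD(3)[OF m] max_idealD(3)[OF n] unfolding T_def by force
  fix a b assume "a \<in> T" "b \<in> T"
  then obtain s t s' t' where st: "a = s * t" "b = s' * t'" "s \<in> R - m" "t \<in> R - n"
    "s' \<in> R - m" "t' \<in> R - n" unfolding T_def by blast
  then have "a * b = (s * s') * (t * t')" by (simp add: ac_simps)
  then show "a * b \<in> T"
    using st mult_notin_max_ideal[OF m] mult_notin_max_ideal[OF n] unfolding T_def by blast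
qed

text \<open>Otherwise rR misses the multiplicative set (R - m)(R - n), so some prime ideal containing r
lies in both m and n, contradicting h-locality.\<close>
lemma h_local_separation:
  assumes hloc: "h_local R" and m: "m \<in> max_ideals R" and n: "n \<in> max_ideals R" and "m \<noteq> n"
    and r: "r \<in> R" "r \<noteq> 0"
  obtains s where "s \<in> R" "s \<notin> m" "s / r \<in> loc_ring R n"
proof (rule ccontr)
  assume no_s: "\<not> thesis"
  let ?T = "{s * t | s t. s \<in> R - m \<and> t \<in> R - n}"
  have disj: "PIdl\<^bsub>ring_of R\<^esub> r \<inter> ?T = {}"
  proof (rule ccontr)
    assume "PIdl\<^bsub>ring_of R\<^esub> r \<inter> ?T \<noteq> {}"
    then obtain a s t where "a * r = s * t" "a \<in> R" "s \<in> R" "s \<notin> m" "t \<in> R" "t \<notin> n"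
      unfolding cgenideal_def by auto
    moreover from calculation have "s / r = a / t"
      using r(2) notin_max_ideal_nonzero[OF n] by (simp add: field_simps)
    ultimately show False using no_s that unfolding loc_ring_def by blast
  qed
  have "ideal (PIdl\<^bsub>ring_of R\<^esub> r) (ring_of R)" using Rd.cgenideal_ideal r(1) by simp
  then obtain P where P: "primeideal P (ring_of R)" "PIdl\<^bsub>ring_of R\<^esub> r \<subseteq> P" "P \<inter> ?T = {}"
    using ex_prime_ideal_avoiding disj mult_closed_products_notin_max_ideals[OF m n] by blast
  have "P \<subseteq> R" using ideal_ring_ofD(1)[OF primeideal.axioms(1)[OF P(1)]] .
  have "P \<subseteq> m \<and> P \<subseteq> n"
  proof (intro conjI subsetI)
    fix p assume p: "p \<in> P"
    have "p = p * 1" "p = 1 * p" by simp_all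
    then show "p \<in> m" "p \<in> n"
      using p P(3) \<open>P \<subseteq> R\<close> one_in max_idealD(3)[OF m] max_idealD(3)[OF n] by blast+
  qed
  moreover have "P \<noteq> {0}" using P(2) Rd.cgenideal_self[of r] r by auto
  ultimately show False
    using hloc P(1) m n \<open>m \<noteq> n\<close> unfolding h_local_def by blast
qed

end

lemma ex_common_multiple:
  fixes U :: "'a::comm_monoid_mult set"
  assumes "finite I" "1 \<in> U" and U_mult: "\<And>a b. a \<in> U \<Longrightarrow> b \<in> U \<Longrightarrow> a * b \<in> U"
    and "\<And>i. i \<in> I \<Longrightarrow> \<exists>s\<in>U. P i s"
    and "\<And>i s t. i \<in> I \<Longrightarrow> P i s \<Longrightarrow> t \<in> U \<Longrightarrow> P i (t * s)"
  shows "\<exists>s\<in>U. \<forall>i\<in>I. P i s"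
  using assms(1,4,5)
proof (induction I rule: finite_induct)
  case empty
  then show ?case using assms(2) by blast
next
  case (insert i I)
  then obtain s where s: "s \<in> U" "\<forall>j\<in>I. P j s" by blast
  obtain t where t: "t \<in> U" "P i t" using insert.prems(1) by blast
  have "P j (t * s)" if "j \<in> I" for j using insert.prems(2) that s t(1) by blast
  moreover have "P i (t * s)" using insert.prems(2)[of i t s] t(2) s(1) by (simp add: mult.commute)
  ultimately show ?case using U_mult[OF t(1) s(1)] by blast
qed

locale vector_action = subdomain R for R :: "'k::field set" +
  fixes scl :: "'k \<Rightarrow> 'v::ab_group_add \<Rightarrow> 'v" and phi :: "'k \<Rightarrow> 'l::ring_1"
    and act :: "'v \<Rightarrow> 'l \<Rightarrow> 'v"
  assumes frac: "frac_field_of R" and vs: "vector_space scl" and ract: "right_action R scl phi act"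
begin

sublocale V: vector_space scl by (rule vs)

lemma act_add_left: "act (v + w) l = act v l + act w l"
  and act_add_right: "act v (l + l') = act v l + act v l'"
  and act_mult: "act v (l * l') = act (act v l) l'"
  and act_one: "act v 1 = v"
  and act_scale: "act (scl c v) l = scl c (act v l)"
  and act_phi: "r \<in> R \<Longrightarrow> act v (phi r) = scl r v"
  using ract unfolding right_action_def by auto

lemma act_zero: "act 0 l = 0"
  using act_add_left[of 0 0 l] by simp

lemma act_sum: "act (sum g F) l = (\<Sum>f\<in>F. act (g f) l)"
  by (induction F rule: infinite_finite_induct) (simp_all add: act_zero act_add_left)

lemma submod_sum: "submod S scl act A \<Longrightarrow> (\<And>f. f \<in> F \<Longrightarrow> g f \<in> A) \<Longrightarrow> sum g F \<in> A"
  by (induction F rule: infinite_finite_induct) (auto simp: submod_def)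

lemma submod_scale: "submod S scl act A \<Longrightarrow> c \<in> S \<Longrightarrow> x \<in> A \<Longrightarrow> scl c x \<in> A"
  unfolding submod_def by blast

lemma gen_spanI:
  "x = (\<Sum>f\<in>F. scl (c f) (act f (l f))) \<Longrightarrow> (\<And>f. f \<in> F \<Longrightarrow> c f \<in> S) \<Longrightarrow> x \<in> gen_span S scl act F"
  unfolding gen_span_def by blast

lemma gen_spanE:
  assumes "x \<in> gen_span S scl act F"
  obtains c l where "x = (\<Sum>f\<in>F. scl (c f) (act f (l f)))" "\<forall>f\<in>F. c f \<in> S"
  using assms unfolding gen_span_def by blast

lemma gen_span_subset:
  assumes A: "submod S scl act A" and F: "F \<subseteq> A"
  shows "gen_span S scl act F \<subseteq> A"
proof
  fix x assume "x \<in> gen_span S scl act F"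
  then obtain c l where x: "x = (\<Sum>f\<in>F. scl (c f) (act f (l f)))" "\<forall>f\<in>F. c f \<in> S"
    by (rule gen_spanE)
  have "scl (c f) (act f (l f)) \<in> A" if "f \<in> F" for f
    using A F x(2) that unfolding submod_def by blast
  then show "x \<in> A" unfolding x(1) by (rule submod_sum[OF A])
qed

lemma generator_in_gen_span:
  assumes "finite F" "f \<in> F"
  shows "f \<in> gen_span R scl act F"
proof (rule gen_spanI[where c="\<lambda>h. if h = f then 1 else 0" and l="\<lambda>_. 1"])
  have "(\<Sum>h\<in>F. scl (if h = f then 1 else 0) (act h 1)) = (\<Sum>h\<in>F. if h = f then h else 0)"
    by (rule sum.cong) (auto simp: act_one)
  also have "\<dots> = f" using assms by simp
  finally show "f = (\<Sum>h\<in>F. scl (if h = f then 1 else 0) (act h 1))" by simp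
qed simp

lemma scale_act_eq_act_phi: "c \<in> R \<Longrightarrow> scl c (act f l) = act f (phi c * l)"
  by (simp add: act_mult act_phi act_scale)

lemma gen_span_submod: "submod R scl act (gen_span R scl act F)"
  unfolding submod_def
proof (intro conjI ballI allI)
  show "0 \<in> gen_span R scl act F"
    by (rule gen_spanI[where c="\<lambda>_. 0" and l="\<lambda>_. 0"]) simp_all
next
  fix x y assume x: "x \<in> gen_span R scl act F" and y: "y \<in> gen_span R scl act F"
  obtain c l where x: "x = (\<Sum>f\<in>F. scl (c f) (act f (l f)))" "\<forall>f\<in>F. c f \<in> R"
    using x by (rule gen_spanE)
  obtain c' l' where y: "y = (\<Sum>f\<in>F. scl (c' f) (act f (l' f)))" "\<forall>f\<in>F. c' f \<in> R"
    using y by (rule gen_spanE)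
  have "x + y = (\<Sum>f\<in>F. scl (c f) (act f (l f)) + scl (c' f) (act f (l' f)))"
    unfolding x y by (simp add: sum.distrib)
  also have "\<dots> = (\<Sum>f\<in>F. scl 1 (act f (phi (c f) * l f + phi (c' f) * l' f)))"
    by (rule sum.cong) (simp_all add: scale_act_eq_act_phi x(2) y(2) act_add_right)
  finally show "x + y \<in> gen_span R scl act F"
    by (rule gen_spanI[where c="\<lambda>_. 1"]) simp
next
  fix x assume "x \<in> gen_span R scl act F"
  then obtain c l where x: "x = (\<Sum>f\<in>F. scl (c f) (act f (l f)))" "\<forall>f\<in>F. c f \<in> R"
    by (rule gen_spanE)
  have "- x = (\<Sum>f\<in>F. scl (- c f) (act f (l f)))"
    unfolding x by (simp add: sum_negf)
  then show "- x \<in> gen_span R scl act F"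
    by (rule gen_spanI) (simp add: x(2) uminus_in)
next
  fix x l0 assume "x \<in> gen_span R scl act F"
  then obtain c l where x: "x = (\<Sum>f\<in>F. scl (c f) (act f (l f)))" "\<forall>f\<in>F. c f \<in> R"
    by (rule gen_spanE)
  have "act x l0 = (\<Sum>f\<in>F. scl (c f) (act f (l f * l0)))"
    unfolding x by (simp add: act_sum act_scale act_mult)
  then show "act x l0 \<in> gen_span R scl act F"
    by (rule gen_spanI) (simp add: x(2))
next
  fix d x assume d: "d \<in> R" and "x \<in> gen_span R scl act F"
  then obtain c l where x: "x = (\<Sum>f\<in>F. scl (c f) (act f (l f)))" "\<forall>f\<in>F. c f \<in> R"
    by (elim gen_spanE)
  have "scl d x = (\<Sum>f\<in>F. scl (d * c f) (act f (l f)))"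
    unfolding x by (simp add: V.scale_sum_right)
  then show "scl d x \<in> gen_span R scl act F"
    by (rule gen_spanI) (simp add: x(2) mult_in d)
qed

lemma gen_span_scale_mem:
  assumes A: "submod R scl act A" and F: "\<And>f. f \<in> F \<Longrightarrow> scl r f \<in> A"
    and x: "x \<in> gen_span R scl act F"
  shows "scl r x \<in> A"
proof -
  obtain c l where x: "x = (\<Sum>f\<in>F. scl (c f) (act f (l f)))" "\<forall>f\<in>F. c f \<in> R"
    using x by (rule gen_spanE)
  have "scl r x = (\<Sum>f\<in>F. act (scl (c f) (scl r f)) (l f))"
    unfolding x V.scale_sum_right by (simp add: act_scale mult.commute)
  also have "\<dots> \<in> A"
  proof (rule submod_sum[OF A])
    fix f assume "f \<in> F"
    then have "scl (c f) (scl r f) \<in> A" using submod_scale[OF A] F x(2) by blast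
    then show "act (scl (c f) (scl r f)) (l f) \<in> A" using A unfolding submod_def by blast
  qed
  finally show ?thesis .
qed

lemma span_ex_denominator:
  assumes A: "submod R scl act A" and x: "x \<in> V.span A"
  obtains r where "r \<in> R" "r \<noteq> 0" "scl r x \<in> A"
proof -
  define T where "T = {x. \<exists>r\<in>R. r \<noteq> 0 \<and> scl r x \<in> A}"
  have A_T: "A \<subseteq> T"
  proof
    fix y assume "y \<in> A"
    then have "scl 1 y \<in> A" by simp
    then show "y \<in> T" unfolding T_def using one_in one_neq_zero by blast
  qed
  have "V.subspace T"
  proof (rule V.subspaceI)
    show "0 \<in> T" using A_T A unfolding submod_def by blast
  next
    fix x y assume "x \<in> T" "y \<in> T"
    then obtain r1 r2 where r: "r1 \<in> R" "r1 \<noteq> 0" "scl r1 x \<in> A" "r2 \<in> R" "r2 \<noteq> 0" "scl r2 y \<in> A"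
      unfolding T_def by blast
    have "scl (r1 * r2) (x + y) = scl r2 (scl r1 x) + scl r1 (scl r2 y)"
      by (simp add: V.scale_right_distrib mult.commute)
    also have "\<dots> \<in> A" using A r unfolding submod_def by blast
    finally have "scl (r1 * r2) (x + y) \<in> A" .
    moreover have "r1 * r2 \<in> R" "r1 * r2 \<noteq> 0" using r mult_in by simp_all
    ultimately show "x + y \<in> T" unfolding T_def by blast
  next
    fix c x assume "x \<in> T"
    then obtain r where r: "r \<in> R" "r \<noteq> 0" "scl r x \<in> A" unfolding T_def by blast
    obtain a b where ab: "a \<in> R" "b \<in> R" "b \<noteq> 0" "c = a / b"
      using frac unfolding frac_field_of_def by blast
    have "b * r * c = a * r" using ab(3,4) by simp
    then have "scl (b * r) (scl c x) = scl a (scl r x)" by (simp only: V.scale_scale)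
    also have "\<dots> \<in> A" using submod_scale[OF A ab(1) r(3)] .
    finally have "scl (b * r) (scl c x) \<in> A" .
    moreover have "b * r \<in> R" "b * r \<noteq> 0" using r ab mult_in by simp_all
    ultimately show "scl c x \<in> T" unfolding T_def by blast
  qed
  then have "x \<in> T" using x A_T V.span_minimal by blast
  then show thesis using that unfolding T_def by blast
qed

lemma gen_span_ex_denominator:
  assumes A: "submod R scl act A" and F: "finite F" "F \<subseteq> V.span A"
  obtains r where "r \<in> R" "r \<noteq> 0" "\<And>x. x \<in> gen_span R scl act F \<Longrightarrow> scl r x \<in> A"
proof -
  have "\<exists>r\<in>R - {0}. \<forall>f\<in>F. scl r f \<in> A"
  proof (rule ex_common_multiple[OF F(1)])
    show "1 \<in> R - {0}" by simp
    show "a * b \<in> R - {0}" if "a \<in> R - {0}" "b \<in> R - {0}" for a b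
      using mult_nonzero_in that .
    show "\<exists>r\<in>R - {0}. scl r f \<in> A" if f: "f \<in> F" for f
    proof -
      obtain r where "r \<in> R" "r \<noteq> 0" "scl r f \<in> A"
        using span_ex_denominator[OF A] F(2) f by blast
      then show ?thesis by blast
    qed
    show "scl (t * r) f \<in> A" if "scl r f \<in> A" "t \<in> R - {0}" for f r t
      using submod_scale[OF A _ that(1), of t] that(2) by simp
  qed
  then obtain r where "r \<in> R" "r \<noteq> 0" "\<forall>f\<in>F. scl r f \<in> A" by blast
  with gen_span_scale_mem[OF A] show thesis using that by blast
qed

lemma R_subset_loc_ring:
  assumes "m \<in> max_ideals R"
  shows "R \<subseteq> loc_ring R m"
proof
  fix c assume "c \<in> R"
  moreover have "c = c / 1" by simp
  ultimately show "c \<in> loc_ring R m"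
    using one_in max_idealD(3)[OF assms] unfolding loc_ring_def by blast
qed

lemma inverse_in_loc_ring: "s \<in> R \<Longrightarrow> s \<notin> m \<Longrightarrow> inverse s \<in> loc_ring R m"
  unfolding loc_ring_def using one_in by (force simp: inverse_eq_divide)

lemma submod_loc_ring_imp_submod:
  "m \<in> max_ideals R \<Longrightarrow> submod (loc_ring R m) scl act A \<Longrightarrow> submod R scl act A"
  unfolding submod_def using R_subset_loc_ring by blast

lemma locI: "a \<in> A \<Longrightarrow> s \<in> R \<Longrightarrow> s \<notin> m \<Longrightarrow> scl (inverse s) a \<in> loc R scl m A"
  unfolding loc_def by blast

lemma loc_memE:
  assumes "m \<in> max_ideals R" "x \<in> loc R scl m A"
  obtains s where "s \<in> R" "s \<notin> m" "scl s x \<in> A"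
proof -
  obtain a s where "x = scl (inverse s) a" "a \<in> A" "s \<in> R" "s \<notin> m"
    using assms(2) unfolding loc_def by blast
  moreover have "s \<noteq> 0" using notin_max_ideal_nonzero[OF assms(1)] calculation by blast
  ultimately show thesis using that by simp
qed

lemma subset_loc: "m \<in> max_ideals R \<Longrightarrow> A \<subseteq> loc R scl m A"
  using locI[of _ A 1 m] max_idealD(3) one_in by fastforce

lemma loc_mono: "A \<subseteq> B \<Longrightarrow> loc R scl m A \<subseteq> loc R scl m B"
  unfolding loc_def by blast

lemma loc_subset_span: "loc R scl m A \<subseteq> V.span A"
  unfolding loc_def by (auto intro: V.span_scale V.span_base)

lemma loc_subset:
  assumes "submod (loc_ring R m) scl act B" "A \<subseteq> B"
  shows "loc R scl m A \<subseteq> B"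
  using assms inverse_in_loc_ring unfolding loc_def submod_def by blast

lemma loc_subset_loc:
  assumes m: "m \<in> max_ideals R" and r: "r \<in> R" "r \<notin> m" and AB: "\<And>x. x \<in> A \<Longrightarrow> scl r x \<in> B"
  shows "loc R scl m A \<subseteq> loc R scl m B"
proof
  fix x assume "x \<in> loc R scl m A"
  then obtain a s where x: "x = scl (inverse s) a" "a \<in> A" "s \<in> R" "s \<notin> m"
    unfolding loc_def by blast
  have "s * r \<in> R - m" using mult_notin_max_ideal[OF m] x r by blast
  then have "scl (inverse (s * r)) (scl r a) \<in> loc R scl m B"
    using locI[OF AB[OF x(2)]] by blast
  moreover have "scl (inverse (s * r)) (scl r a) = x"
    using notin_max_ideal_nonzero[OF m r(2)] unfolding x(1) by simp
  ultimately show "x \<in> loc R scl m B" by simp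
qed

lemma submod_loc:
  assumes m: "m \<in> max_ideals R" and A: "submod R scl act A"
  shows "submod (loc_ring R m) scl act (loc R scl m A)"
  unfolding submod_def
proof (intro conjI ballI allI)
  show "0 \<in> loc R scl m A" using A subset_loc[OF m] unfolding submod_def by blast
next
  fix x y assume "x \<in> loc R scl m A" "y \<in> loc R scl m A"
  then obtain a s b t where xy: "x = scl (inverse s) a" "a \<in> A" "s \<in> R" "s \<notin> m"
    "y = scl (inverse t) b" "b \<in> A" "t \<in> R" "t \<notin> m" unfolding loc_def by blast
  have "inverse (s * t) * t = inverse s" "inverse (s * t) * s = inverse t"
    using notin_max_ideal_nonzero[OF m] xy(4,8) by (auto simp: field_simps)
  then have "x + y = scl (inverse (s * t)) (scl t a + scl s b)"
    unfolding xy V.scale_right_distrib V.scale_scale by (simp only:)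
  moreover have "scl t a + scl s b \<in> A" using A xy unfolding submod_def by blast
  moreover have "s * t \<in> R - m" using mult_notin_max_ideal[OF m] xy by blast
  ultimately show "x + y \<in> loc R scl m A" using locI[of "scl t a + scl s b" A "s * t" m] by (simp only:) simp
next
  fix x assume "x \<in> loc R scl m A"
  then obtain a s where x: "x = scl (inverse s) a" "a \<in> A" "s \<in> R" "s \<notin> m"
    unfolding loc_def by blast
  have "- a \<in> A" using A x unfolding submod_def by blast
  moreover have "- x = scl (inverse s) (- a)" unfolding x(1) by simp
  ultimately show "- x \<in> loc R scl m A" using locI[OF _ x(3,4)] by (simp only:)
next
  fix x l assume "x \<in> loc R scl m A"
  then obtain a s where x: "x = scl (inverse s) a" "a \<in> A" "s \<in> R" "s \<notin> m"
    unfolding loc_def by blast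
  have "act a l \<in> A" using A x unfolding submod_def by blast
  then show "act x l \<in> loc R scl m A" using locI[OF _ x(3,4)] x(1) by (simp add: act_scale)
next
  fix c x assume c: "c \<in> loc_ring R m" and "x \<in> loc R scl m A"
  then obtain a s where x: "x = scl (inverse s) a" "a \<in> A" "s \<in> R" "s \<notin> m"
    unfolding loc_def by blast
  obtain b u where c: "c = b / u" "b \<in> R" "u \<in> R" "u \<notin> m"
    using c unfolding loc_ring_def by blast
  have "scl c x = scl (inverse (u * s)) (scl b a)"
    unfolding x c by (simp add: field_simps)
  moreover have "scl b a \<in> A" using submod_scale[OF A c(2) x(2)] .
  moreover have "u * s \<in> R - m" using mult_notin_max_ideal[OF m] x c by blast
  ultimately show "scl c x \<in> loc R scl m A" using locI[of "scl b a" A "u * s" m] by (simp only:) simp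
qed

text \<open>The conductor {a. a x \<in> P} is an ideal contained in no maximal ideal.\<close>
lemma mem_if_locally_mem:
  assumes P: "submod R scl act P"
    and local: "\<And>m. m \<in> max_ideals R \<Longrightarrow> \<exists>s\<in>R. s \<notin> m \<and> scl s x \<in> P"
  shows "x \<in> P"
proof -
  let ?J = "{a \<in> R. scl a x \<in> P}"
  have "ideal ?J (ring_of R)"
  proof (rule ideal_ring_ofI)
    show "?J \<subseteq> R" by blast
    show "0 \<in> ?J" using P unfolding submod_def by simp
    show "a + b \<in> ?J" if "a \<in> ?J" "b \<in> ?J" for a b
      using that P add_in unfolding submod_def by (simp add: V.scale_left_distrib)
    show "c * a \<in> ?J" if "c \<in> R" "a \<in> ?J" for c a
      using that submod_scale[OF P, of c "scl a x"] mult_in by simp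
  qed
  moreover have "\<not> ?J \<subseteq> m" if "m \<in> max_ideals R" for m
    using local[OF that] by blast
  ultimately have "1 \<in> ?J" using ex_max_ideal_containing by blast
  then show ?thesis by simp
qed

lemma fin_gen_loc_obtains_generators:
  assumes m: "m \<in> max_ideals R" and N: "submod R scl act N"
    and fg: "fin_gen (loc_ring R m) scl act (loc R scl m N)"
  obtains H where "finite H" "H \<subseteq> N" "loc R scl m N \<subseteq> loc R scl m (gen_span R scl act H)"
proof -
  obtain G where G: "finite G" "G \<subseteq> loc R scl m N" "loc R scl m N = gen_span (loc_ring R m) scl act G"
    using fg unfolding fin_gen_def by blast
  have "\<forall>g\<in>G. \<exists>s. s \<in> R \<and> s \<notin> m \<and> scl s g \<in> N"
    using G(2) loc_memE[OF m] by (metis subsetD)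
  then obtain s where s: "\<And>g. g \<in> G \<Longrightarrow> s g \<in> R \<and> s g \<notin> m \<and> scl (s g) g \<in> N"
    by metis
  define H where "H = (\<lambda>g. scl (s g) g) ` G"
  have "finite H" "H \<subseteq> N" using G(1) s unfolding H_def by auto
  have "G \<subseteq> loc R scl m (gen_span R scl act H)"
  proof
    fix g assume g: "g \<in> G"
    have "scl (s g) g \<in> gen_span R scl act H"
      using generator_in_gen_span[OF \<open>finite H\<close>] g unfolding H_def by blast
    then have "scl (inverse (s g)) (scl (s g) g) \<in> loc R scl m (gen_span R scl act H)"
      using locI s[OF g] by blast
    then show "g \<in> loc R scl m (gen_span R scl act H)"
      using notin_max_ideal_nonzero[OF m] s[OF g] by simp
  qed
  then have "loc R scl m N \<subseteq> loc R scl m (gen_span R scl act H)"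
    unfolding G(3) by (rule gen_span_subset[OF submod_loc[OF m gen_span_submod]])
  then show thesis using that \<open>finite H\<close> \<open>H \<subseteq> N\<close> by blast
qed

end

locale local_lattices = vector_action R scl phi act
  for R :: "'k::field set" and scl :: "'k \<Rightarrow> 'v::ab_group_add \<Rightarrow> 'v"
    and phi :: "'k \<Rightarrow> 'l::ring_1" and act :: "'v \<Rightarrow> 'l \<Rightarrow> 'v" +
  fixes M :: "'v set" and X :: "'k set \<Rightarrow> 'v set"
  assumes h_local: "h_local R" and M_submod: "submod R scl act M" and M_fin_gen: "fin_gen R scl act M"
    and X_subset: "\<And>m. m \<in> max_ideals R \<Longrightarrow> X m \<subseteq> loc R scl m M"
    and X_submod: "\<And>m. m \<in> max_ideals R \<Longrightarrow> submod (loc_ring R m) scl act (X m)"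
    and X_span: "\<And>m. m \<in> max_ideals R \<Longrightarrow> V.span (X m) = V.span (loc R scl m M)"
begin

definition realization :: "'v set \<Rightarrow> bool" where
  "realization N \<longleftrightarrow> N \<subseteq> M \<and> submod R scl act N \<and> (\<forall>m\<in>max_ideals R. loc R scl m N = X m)"

lemma X_submod_R: "m \<in> max_ideals R \<Longrightarrow> submod R scl act (X m)"
  using X_submod submod_loc_ring_imp_submod by blast

lemma ex_multiplier_into:
  assumes A: "submod R scl act A" and MA: "M \<subseteq> V.span A"
  obtains r where "r \<in> R" "r \<noteq> 0" "\<And>x. x \<in> M \<Longrightarrow> scl r x \<in> A"
proof -
  obtain F where F: "finite F" "F \<subseteq> M" "M = gen_span R scl act F"
    using M_fin_gen unfolding fin_gen_def by blast
  then have "F \<subseteq> V.span A" using MA by blast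
  with gen_span_ex_denominator[OF A F(1)] F(3) that show thesis by blast
qed

lemma M_subset_span_X:
  assumes m: "m \<in> max_ideals R"
  shows "M \<subseteq> V.span (X m)"
  using subset_loc[OF m] V.span_superset X_span[OF m] by blast

lemma realization_ex_multiplier:
  assumes "realization N"
  obtains r where "r \<in> R" "r \<noteq> 0" "\<And>x. x \<in> M \<Longrightarrow> scl r x \<in> N"
proof -
  obtain m where m: "m \<in> max_ideals R" using ex_max_ideal by blast
  have N: "submod R scl act N" "loc R scl m N = X m"
    using assms m unfolding realization_def by auto
  have "V.span (loc R scl m N) \<subseteq> V.span N"
    using loc_subset_span V.span_minimal V.subspace_span by blast
  then have "M \<subseteq> V.span N" using M_subset_span_X[OF m] N(2) by simp
  with ex_multiplier_into[OF N(1)] that show thesis by blast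
qed

lemma realization_imp_finite:
  assumes N: "realization N"
  shows "finite {m \<in> max_ideals R. X m \<noteq> loc R scl m M}"
proof -
  obtain r where r: "r \<in> R" "r \<noteq> 0" "\<And>x. x \<in> M \<Longrightarrow> scl r x \<in> N"
    using realization_ex_multiplier[OF N] by blast
  have "X m = loc R scl m M" if m: "m \<in> max_ideals R" and "r \<notin> m" for m
  proof
    show "X m \<subseteq> loc R scl m M" using X_subset[OF m] .
    have "loc R scl m M \<subseteq> loc R scl m N" using loc_subset_loc[OF m r(1) \<open>r \<notin> m\<close> r(3)] .
    then show "loc R scl m M \<subseteq> X m" using N m unfolding realization_def by auto
  qed
  then have "{m \<in> max_ideals R. X m \<noteq> loc R scl m M} \<subseteq> {m \<in> max_ideals R. r \<in> m}" by blast
  moreover have "finite {m \<in> max_ideals R. r \<in> m}" using h_local r unfolding h_local_def by blast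
  ultimately show ?thesis by (rule finite_subset)
qed

lemma ex_multiplier_into_X:
  assumes "m \<in> max_ideals R"
  obtains r where "r \<in> R" "r \<noteq> 0" "\<And>x. x \<in> M \<Longrightarrow> scl r x \<in> X m"
  using ex_multiplier_into[OF X_submod_R[OF assms] M_subset_span_X[OF assms]] that by blast

lemma ex_unit_multiplier_into_X:
  assumes m: "m \<in> max_ideals R" and n: "n \<in> max_ideals R" "n \<noteq> m"
  obtains s where "s \<in> R" "s \<notin> m" "\<And>x. x \<in> M \<Longrightarrow> scl s x \<in> X n"
proof -
  obtain r where r: "r \<in> R" "r \<noteq> 0" "\<And>x. x \<in> M \<Longrightarrow> scl r x \<in> X n"
    using ex_multiplier_into_X[OF n(1)] by blast
  obtain s where s: "s \<in> R" "s \<notin> m" "s / r \<in> loc_ring R n"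
    using h_local_separation[OF h_local m n(1) n(2)[symmetric] r(1,2)] by blast
  have "scl s x \<in> X n" if "x \<in> M" for x
  proof -
    have "scl (s / r) (scl r x) \<in> X n" using submod_scale[OF X_submod[OF n(1)] s(3) r(3)[OF that]] .
    then show ?thesis using r(2) by simp
  qed
  then show thesis using that s(1,2) by blast
qed

lemma ex_unit_multiplier_into_all_X:
  assumes m: "m \<in> max_ideals R" and fin: "finite {n \<in> max_ideals R. X n \<noteq> loc R scl n M}"
  obtains p where "p \<in> R" "p \<notin> m" "\<And>n x. n \<in> max_ideals R \<Longrightarrow> n \<noteq> m \<Longrightarrow> x \<in> M \<Longrightarrow> scl p x \<in> X n"
proof -
  let ?S = "{n \<in> max_ideals R. X n \<noteq> loc R scl n M} - {m}"
  have "\<exists>p\<in>R - m. \<forall>n\<in>?S. \<forall>x\<in>M. scl p x \<in> X n"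
  proof (rule ex_common_multiple)
    show "finite ?S" using fin by blast
    show "1 \<in> R - m" using max_idealD(3)[OF m] by simp
    show "a * b \<in> R - m" if "a \<in> R - m" "b \<in> R - m" for a b
      using mult_notin_max_ideal[OF m that] .
    show "\<exists>s\<in>R - m. \<forall>x\<in>M. scl s x \<in> X n" if n: "n \<in> ?S" for n
    proof -
      obtain s where "s \<in> R" "s \<notin> m" "\<And>x. x \<in> M \<Longrightarrow> scl s x \<in> X n"
        using ex_unit_multiplier_into_X[OF m, of n] n by blast
      then show ?thesis by blast
    qed
    show "\<forall>x\<in>M. scl (t * s) x \<in> X n"
      if n: "n \<in> ?S" and s: "\<forall>x\<in>M. scl s x \<in> X n" and t: "t \<in> R - m" for n s t
    proof
      fix x assume "x \<in> M"
      then have "scl t (scl s x) \<in> X n" using submod_scale[OF X_submod_R] n s t by blast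
      then show "scl (t * s) x \<in> X n" by simp
    qed
  qed
  then obtain p where p: "p \<in> R - m" "\<forall>n\<in>?S. \<forall>x\<in>M. scl p x \<in> X n" by blast
  have "scl p x \<in> X n" if "n \<in> max_ideals R" "n \<noteq> m" "x \<in> M" for n x
  proof (cases "n \<in> ?S")
    case False
    then have "X n = loc R scl n M" using that by blast
    then show ?thesis using subset_loc[OF that(1)] submod_scale[OF M_submod _ that(3), of p] p(1) by blast
  qed (use p that in blast)
  then show thesis using that p(1) by blast
qed

lemma realization_Inter:
  assumes fin: "finite {m \<in> max_ideals R. X m \<noteq> loc R scl m M}"
  shows "realization (M \<inter> (\<Inter>m\<in>max_ideals R. X m))"
proof -
  define N where "N = M \<inter> (\<Inter>m\<in>max_ideals R. X m)"
  have "submod R scl act N"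
    using M_submod X_submod_R unfolding submod_def N_def by auto
  moreover have "loc R scl m N = X m" if m: "m \<in> max_ideals R" for m
  proof
    show "loc R scl m N \<subseteq> X m" using loc_subset[OF X_submod[OF m]] m unfolding N_def by blast
    show "X m \<subseteq> loc R scl m N"
    proof
      fix x assume x: "x \<in> X m"
      obtain s where s: "s \<in> R" "s \<notin> m" "scl s x \<in> M"
        using loc_memE[OF m] X_subset[OF m] x by blast
      obtain p where p: "p \<in> R" "p \<notin> m"
        and p_X: "\<And>n y. n \<in> max_ideals R \<Longrightarrow> n \<noteq> m \<Longrightarrow> y \<in> M \<Longrightarrow> scl p y \<in> X n"
        using ex_unit_multiplier_into_all_X[OF m fin] by blast
      let ?y = "scl p (scl s x)"
      have "?y \<in> X n" if n: "n \<in> max_ideals R" for n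
      proof (cases "n = m")
        case True
        then show ?thesis using submod_scale[OF X_submod_R[OF m] mult_in[OF p(1) s(1)] x] by simp
      qed (use p_X n s(3) in blast)
      moreover have "?y \<in> M" using submod_scale[OF M_submod p(1) s(3)] .
      ultimately have "?y \<in> N" unfolding N_def by blast
      moreover have "p * s \<in> R - m" using mult_notin_max_ideal[OF m] p s by blast
      ultimately have "scl (inverse (p * s)) ?y \<in> loc R scl m N" using locI by blast
      moreover have "scl (inverse (p * s)) ?y = x"
        using notin_max_ideal_nonzero[OF m p(2)] notin_max_ideal_nonzero[OF m s(2)]
        by (simp add: field_simps)
      ultimately show "x \<in> loc R scl m N" by simp
    qed
  qed
  ultimately show ?thesis unfolding realization_def N_def by blast
qed

lemma realization_fin_gen:
  assumes fg: "\<And>m. m \<in> max_ideals R \<Longrightarrow> fin_gen (loc_ring R m) scl act (X m)"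
    and N: "realization N"
  shows "fin_gen R scl act N"
proof -
  have N_M: "N \<subseteq> M" and N_submod: "submod R scl act N"
    and N_loc: "\<And>m. m \<in> max_ideals R \<Longrightarrow> loc R scl m N = X m"
    using N unfolding realization_def by auto
  obtain r where r: "r \<in> R" "r \<noteq> 0" "\<And>x. x \<in> M \<Longrightarrow> scl r x \<in> N"
    using realization_ex_multiplier[OF N] by blast
  obtain F where F: "finite F" "F \<subseteq> M" "M = gen_span R scl act F"
    using M_fin_gen unfolding fin_gen_def by blast
  let ?Z = "{m \<in> max_ideals R. r \<in> m}"
  have "\<forall>m\<in>?Z. \<exists>H. finite H \<and> H \<subseteq> N \<and> loc R scl m N \<subseteq> loc R scl m (gen_span R scl act H)"
  proof
    fix m assume "m \<in> ?Z"
    then have m: "m \<in> max_ideals R" by blast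
    have "fin_gen (loc_ring R m) scl act (loc R scl m N)" using fg[OF m] N_loc[OF m] by simp
    then obtain H where "finite H" "H \<subseteq> N" "loc R scl m N \<subseteq> loc R scl m (gen_span R scl act H)"
      by (rule fin_gen_loc_obtains_generators[OF m N_submod])
    then show "\<exists>H. finite H \<and> H \<subseteq> N \<and> loc R scl m N \<subseteq> loc R scl m (gen_span R scl act H)"
      by blast
  qed
  then obtain H where H: "\<forall>m\<in>?Z.
      finite (H m) \<and> H m \<subseteq> N \<and> loc R scl m N \<subseteq> loc R scl m (gen_span R scl act (H m))"
    by (rule bchoice[THEN exE])
  define G where "G = scl r ` F \<union> (\<Union>m\<in>?Z. H m)"
  have "finite ?Z" using h_local r(1,2) unfolding h_local_def by blast
  then have G: "finite G" "G \<subseteq> N" using F r(3) H unfolding G_def by auto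
  let ?P = "gen_span R scl act G"
  have G_P: "G \<subseteq> ?P" using generator_in_gen_span[OF G(1)] by blast
  have "N \<subseteq> ?P"
  proof
    fix x assume x: "x \<in> N"
    show "x \<in> ?P"
    proof (rule mem_if_locally_mem[OF gen_span_submod])
      fix m assume m: "m \<in> max_ideals R"
      show "\<exists>s\<in>R. s \<notin> m \<and> scl s x \<in> ?P"
      proof (cases "r \<in> m")
        case False
        have "scl r x \<in> ?P"
          using gen_span_scale_mem[OF gen_span_submod, of F r] G_P x N_M F(3) unfolding G_def by blast
        then show ?thesis using r(1) False by blast
      next
        case True
        have "x \<in> loc R scl m N" using subset_loc[OF m] x by blast
        also have "\<dots> \<subseteq> loc R scl m (gen_span R scl act (H m))" using H m True by blast
        also have "\<dots> \<subseteq> loc R scl m ?P"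
          using H m True G_P unfolding G_def by (intro loc_mono gen_span_subset[OF gen_span_submod]) blast
        finally obtain s where "s \<in> R" "s \<notin> m" "scl s x \<in> ?P" by (rule loc_memE[OF m])
        then show ?thesis by blast
      qed
    qed
  qed
  then have "N = ?P" using gen_span_subset[OF N_submod G(2)] by blast
  then show ?thesis unfolding fin_gen_def using G by blast
qed

end

theorem mainTheorem15:
  fixes R :: "'k::field set"
    and scl :: "'k \<Rightarrow> 'v::ab_group_add \<Rightarrow> 'v"
    and phi :: "'k \<Rightarrow> 'l::ring_1"
    and act :: "'v \<Rightarrow> 'l \<Rightarrow> 'v"
    and M :: "'v set"
    and X :: "'k set \<Rightarrow> 'v set"
  assumes dom: "domain (ring_of R)"
    and frac: "frac_field_of R"
    and hloc: "h_local R"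
    and vs: "vector_space scl"
    and alg: "R_algebra R phi"
    and ract: "right_action R scl phi act"
    and Msub: "submod R scl act M"
    and Mfg: "fin_gen R scl act M"
    and Xsub: "\<And>m. m \<in> max_ideals R \<Longrightarrow> X m \<subseteq> loc R scl m M \<and> submod (loc_ring R m) scl act (X m)"
    and Xspan: "\<And>m. m \<in> max_ideals R \<Longrightarrow>
                   module.span scl (X m) = Modules.module.span scl (loc R scl m M)"
  shows "((\<exists>N. N \<subseteq> M \<and> submod R scl act N \<and> (\<forall>m\<in>max_ideals R. loc R scl m N = X m))
            \<longleftrightarrow> finite {m \<in> max_ideals R. X m \<noteq> loc R scl m M})
         \<and> ((\<forall>m\<in>max_ideals R. fin_gen (loc_ring R m) scl act (X m)) \<longrightarrow>
            (\<forall>N. N \<subseteq> M \<and> submod R scl act N \<and> (\<forall>m\<in>max_ideals R. loc R scl m N = X m)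
                 \<longrightarrow> fin_gen R scl act N))"
proof -
  have "vector_action R scl phi act"
    by (intro vector_action.intro subdomain.intro vector_action_axioms.intro dom frac vs ract)
  moreover have "local_lattices_axioms R scl act M X"
    using hloc Msub Mfg Xsub Xspan by (intro local_lattices_axioms.intro) auto
  ultimately interpret local_lattices R scl phi act M X
    by (rule local_lattices.intro)
  have realization_iff: "(N \<subseteq> M \<and> submod R scl act N \<and> (\<forall>m\<in>max_ideals R. loc R scl m N = X m))
      \<longleftrightarrow> realization N" for N
    by (simp add: realization_def)
  show ?thesis
    unfolding realization_iff
    using realization_imp_finite realization_Inter realization_fin_gen by blast
qed

end
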